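(* Let $k\ge 5$ be an integer and let $h_2(j)=k^2j^2+(k-k^2)j+1$ for integers $j\ge0$. Then $h_2\in\mathcal H_0$, $\beta_j^5(h_2)\ge 0$ for all $0\le j\le 5$, $\beta_3^6(h_2)<0$, and $\operatorname{hdepth}(h_2)=5$.
   Context: Let $\mathcal H_0$ denote the set of functions $h:\mathbb Z_{\ge 0}\to\mathbb Z_{\ge 0}$ with $h(0)>0$. For $h\in\mathcal H_0$ and integers $0\le k\le d$, put $\beta_k^d(h)=\sum_{j=0}^k(-1)^{k-j}\binom{d-j}{k-j}h(j)$. The Hilbert depth of $h$ is $\operatorname{hdepth}(h)=\max\{d\in\mathbb Z_{\ge0}:\ \beta_k^d(h)\ge 0\text{ for all }0\le k\le d\}$; this set contains $d=0$ and is known to be bounded above by $\lfloor h(1)/h(0)\rfloor$, so the maximum exists. *)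

theory Defs
  imports Main
begin

text \<open>Functions Z_{>=0} -> Z_{>=0} are modelled as nat => int with nonnegative values,
so that membership in H0 is a genuine condition.\<close>

definition H0 :: "(nat \<Rightarrow> int) set" where
  "H0 = {h. (\<forall>j. h j \<ge> 0) \<and> h 0 > 0}"

definition beta :: "nat \<Rightarrow> nat \<Rightarrow> (nat \<Rightarrow> int) \<Rightarrow> int" where
  "beta k d h = (\<Sum>j\<le>k. (-1) ^ (k - j) * int ((d - j) choose (k - j)) * h j)"

definition hdepth :: "(nat \<Rightarrow> int) \<Rightarrow> nat" where
  "hdepth h = (GREATEST d. \<forall>k\<le>d. beta k d h \<ge> 0)"

end

theory Submission
  imports Defs
begin

text \<open>The \<open>\<beta>\<close>-numbers \<open>\<beta>\<^sub>j\<^sup>5(h)\<close> are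
  explicit polynomials in \<open>k\<close> (namely \<open>1, k - 4, 2k\<^sup>2 - 2k + 7, 3k - 6, 6k\<^sup>2 + 3, 12k\<^sup>2 + 3k\<close>),
  all nonnegative. For \<open>d \<ge> 6\<close> there are two ways to fail: if \<open>d > k + 1 = h(1)/h(0)\<close> then
  already \<open>\<beta>\<^sub>1\<^sup>d(h) = h(1) - d h(0) < 0\<close>; if \<open>6 \<le> d \<le> k + 1\<close>, then \<open>6 \<beta>\<^sub>3\<^sup>d(h)\<close> is a cubic in
  \<open>d, k\<close> which, after substituting \<open>d = 6 + a\<close>, \<open>k = 5 + a + b\<close>, is minus a polynomial with
  nonnegative coefficients in \<open>a, b \<ge> 0\<close> and positive constant term.\<close>

definition quad_hilbert :: "int \<Rightarrow> nat \<Rightarrow> int" where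
  "quad_hilbert k j = k^2 * (int j)^2 + (k - k^2) * int j + 1"

lemma quad_hilbert_nonneg:
  assumes "k \<ge> 0"
  shows "quad_hilbert k j \<ge> 0"
proof -
  have "quad_hilbert k j = k^2 * (int j * (int j - 1)) + k * int j + 1"
    by (simp add: quad_hilbert_def power2_eq_square algebra_simps)
  moreover have "int j * (int j - 1) \<ge> 0" by (cases j) auto
  ultimately show ?thesis using assms by simp
qed

lemma quad_hilbert_in_H0: "k \<ge> 0 \<Longrightarrow> quad_hilbert k \<in> H0"
  by (simp add: H0_def quad_hilbert_nonneg) (simp add: quad_hilbert_def)

lemma two_times_choose_two: "2 * int (n choose 2) = int n * (int n - 1)"
  by (induction n) (simp_all add: numeral_eq_Suc algebra_simps)

lemma six_times_choose_three: "6 * int (n choose 3) = int n * (int n - 1) * (int n - 2)"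
proof (induction n)
  case (Suc n)
  have "Suc n choose 3 = (n choose 2) + (n choose 3)" by (simp add: numeral_eq_Suc)
  then have "6 * int (Suc n choose 3) = 3 * (2 * int (n choose 2)) + 6 * int (n choose 3)" by simp
  then show ?case unfolding two_times_choose_two Suc.IH by (simp add: algebra_simps)
qed simp

lemma beta_1: "beta 1 d h = h 1 - int d * h 0"
proof -
  have "{..1::nat} = {0, 1}" by auto
  then show ?thesis by (simp add: beta_def)
qed

lemma beta_3:
  assumes "d \<ge> 2"
  shows "6 * beta 3 d h = - int d * (int d - 1) * (int d - 2) * h 0
    + 3 * (int d - 1) * (int d - 2) * h 1 - 6 * (int d - 2) * h 2 + 6 * h 3"
proof -
  have "{..3::nat} = {0, 1, 2, 3}" by auto
  then have "beta 3 d h = - int (d choose 3) * h 0 + int ((d - 1) choose 2) * h 1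
      - int (d - 2) * h 2 + h 3"
    using assms by (simp add: beta_def of_nat_diff algebra_simps)
  then have "6 * beta 3 d h = - (6 * int (d choose 3)) * h 0
      + 3 * (2 * int ((d - 1) choose 2)) * h 1 - 6 * int (d - 2) * h 2 + 6 * h 3"
    by algebra
  then show ?thesis
    using assms by (simp add: six_times_choose_three two_times_choose_two of_nat_diff)
qed

lemma hdepth_eqI:
  assumes "\<forall>j\<le>d. beta j d h \<ge> 0"
    and "\<And>e. d < e \<Longrightarrow> \<exists>j\<le>e. beta j e h < 0"
  shows "hdepth h = d"
  unfolding hdepth_def
proof (rule Greatest_equality)
  show "\<And>e. \<forall>j\<le>e. beta j e h \<ge> 0 \<Longrightarrow> e \<le> d"
    using assms(2) by (meson leI not_le)
qed (fact assms(1))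

lemma beta_5_quad_hilbert:
  "beta 0 5 (quad_hilbert k) = 1"
  "beta 1 5 (quad_hilbert k) = k - 4"
  "beta 2 5 (quad_hilbert k) = 2 * k^2 - 2 * k + 7"
  "beta 3 5 (quad_hilbert k) = 3 * k - 6"
  "beta 4 5 (quad_hilbert k) = 6 * k^2 + 3"
  "beta 5 5 (quad_hilbert k) = 12 * k^2 + 3 * k"
  by (simp_all add: beta_def quad_hilbert_def numeral_eq_Suc atMost_Suc algebra_simps power2_eq_square)

lemma beta_5_quad_hilbert_nonneg:
  assumes "k \<ge> 4" "j \<le> 5"
  shows "beta j 5 (quad_hilbert k) \<ge> 0"
proof -
  have "2 * k^2 - 2 * k + 7 \<ge> 0"
    using assms(1) mult_right_mono[of 1 k k] by (simp add: power2_eq_square)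
  moreover have "j \<in> {0, 1, 2, 3, 4, 5}" using assms(2) by auto
  ultimately show ?thesis
    using assms(1) by (auto simp: beta_5_quad_hilbert simp del: One_nat_def)
qed

lemma beta_1_quad_hilbert_neg: "k + 1 < int d \<Longrightarrow> beta 1 d (quad_hilbert k) < 0"
  using beta_1[of d "quad_hilbert k"] by (simp add: quad_hilbert_def)

lemma beta_3_quad_hilbert_neg:
  assumes "6 \<le> d" "int d \<le> k + 1"
  shows "beta 3 d (quad_hilbert k) < 0"
proof -
  obtain a b :: int where a: "a \<ge> 0" "int d = 6 + a" and b: "b \<ge> 0" "k = 5 + a + b"
    using assms by (intro that[of "int d - 6" "k + 1 - int d"]) auto
  have "6 * beta 3 d (quad_hilbert k) = - int d * (int d - 1) * (int d - 2)
      + 3 * (int d - 1) * (int d - 2) * (k + 1) - 6 * (int d - 2) * (2 * k^2 + 2 * k + 1)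
      + 6 * (6 * k^2 + 3 * k + 1)"
    using assms(1) by (simp add: beta_3 quad_hilbert_def power2_eq_square algebra_simps)
  also have "\<dots> = -(228 + 90*b + 12*b^2 + 368*a + 129*a*b + 12*a*b^2
      + 114*a^2 + 21*a^2*b + 10*a^3)"
    unfolding a(2) b(2) by (simp add: power2_eq_square power3_eq_cube algebra_simps)
  finally have "6 * beta 3 d (quad_hilbert k) = \<dots>" .
  moreover have "0 \<le> 90*b + 12*b^2 + 368*a + 129*a*b + 12*a*b^2 + 114*a^2 + 21*a^2*b + 10*a^3"
    using a b by simp
  ultimately show ?thesis by linarith
qed

theorem mainTheorem8:
  fixes k :: int
  assumes "k \<ge> 5"
  defines "h2 \<equiv> (\<lambda>j::nat. k^2 * (int j)^2 + (k - k^2) * int j + 1)"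
  shows "h2 \<in> H0 \<and> (\<forall>j\<le>5. beta j 5 h2 \<ge> 0) \<and> beta 3 6 h2 < 0 \<and> hdepth h2 = 5"
proof -
  have h2: "h2 = quad_hilbert k" unfolding h2_def quad_hilbert_def ..
  have beta_5: "\<forall>j\<le>5. beta j 5 h2 \<ge> 0"
    using assms(1) by (simp add: h2 beta_5_quad_hilbert_nonneg)
  have "\<exists>j\<le>d. beta j d h2 < 0" if "5 < d" for d
  proof (cases "int d \<le> k + 1")
    case True
    then show ?thesis using that by (intro exI[of _ 3]) (simp add: h2 beta_3_quad_hilbert_neg)
  next
    case False
    then show ?thesis
      unfolding h2 by (intro exI[of _ 1] conjI beta_1_quad_hilbert_neg) (use that in auto)
  qed
  then have "hdepth h2 = 5" using beta_5 by (rule hdepth_eqI[rotated])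
  moreover have "beta 3 6 h2 < 0" using assms(1) by (simp add: h2 beta_3_quad_hilbert_neg)
  ultimately show ?thesis using assms(1) beta_5 by (simp add: h2 quad_hilbert_in_H0)
qed

end
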